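(* If all entries $p_{i,n}$ of $P$ are positive, then $F$ is a bijection of $[0,1]$ onto $[0,1]$.
   Context: Let $(m_n)_{n\ge1}$ be finite nonnegative integers and $\tilde Q=\|q_{i,n}\|$ ($i\in\{0,\dots,m_n\}$) with $q_{i,n}>0$, $\sum_{i}q_{i,n}=1$ for all $n$, and $\prod_n q_{i_n,n}=0$ for every digit sequence $(i_n)$. Put $a_{0,n}=0$, $a_{i,n}=\sum_{l<i}q_{l,n}$; $\Delta^{\tilde Q}_{j_1j_2\dots}=a_{j_1,1}+\sum_{n\ge2}a_{j_n,n}\prod_{l<n}q_{j_l,l}$. The nega-$\tilde Q$-representation $x=\Delta^{-\tilde Q}_{i_1i_2\dots}$ means $x=\Delta^{\tilde Q}_{i_1[m_2-i_2]i_3[m_4-i_4]\dots}$; every $x\in[0,1]$ has one. Let $P=\|p_{i,n}\|$ have the same shape with $p_{i,n}\in(-1,1)$, $\sum_ip_{i,n}=1$, $\prod_n|p_{i_n,n}|=0$ for every digit sequence, $0<\sum_{i<c}p_{i,n}<1$ for $c\in\{1,\dots,m_n\}$. Put $\beta_{0,n}=0$, $\beta_{c,n}=\sum_{i<c}p_{i,n}$; for odd $n$: $\tilde p_{i,n}=p_{i,n}$, $\tilde\beta_{i,n}=\beta_{i,n}$; for even $n$: $\tilde p_{i,n}=p_{m_n-i,n}$, $\tilde\beta_{i,n}=\beta_{m_n-i,n}$. $F(x)=\beta_{i_1,1}+\sum_{k\ge2}\tilde\beta_{i_k,k}\prod_{j<k}\tilde p_{i_j,j}$ for $x=\Delta^{-\tilde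 Q}_{i_1i_2\dots}$ (independent of the representation). *)

theory Defs
  imports Complex_Main
begin

text \<open>Matrices are functions \<open>q i n\<close> (digit i, position n), positions n \<ge> 1,
  digits i \<in> {0..m n}.\<close>

definition digit_seq :: "(nat \<Rightarrow> nat) \<Rightarrow> (nat \<Rightarrow> nat) \<Rightarrow> bool" where
  "digit_seq m d \<longleftrightarrow> (\<forall>n\<ge>1. d n \<le> m n)"

definition Q_matrix :: "(nat \<Rightarrow> nat) \<Rightarrow> (nat \<Rightarrow> nat \<Rightarrow> real) \<Rightarrow> bool" where
  "Q_matrix m q \<longleftrightarrow>
     (\<forall>n\<ge>1. (\<forall>i\<le>m n. q i n > 0) \<and> (\<Sum>i\<le>m n. q i n) = 1) \<and>
     (\<forall>d. digit_seq m d \<longrightarrow> (\<lambda>N. \<Prod>n\<in>{1..N}. q (d n) n) \<longlonglongrightarrow> 0)"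

definition P_matrix :: "(nat \<Rightarrow> nat) \<Rightarrow> (nat \<Rightarrow> nat \<Rightarrow> real) \<Rightarrow> bool" where
  "P_matrix m p \<longleftrightarrow>
     (\<forall>n\<ge>1. (\<forall>i\<le>m n. -1 < p i n \<and> p i n < 1) \<and> (\<Sum>i\<le>m n. p i n) = 1 \<and>
        (\<forall>c\<in>{1..m n}. 0 < (\<Sum>i<c. p i n) \<and> (\<Sum>i<c. p i n) < 1)) \<and>
     (\<forall>d. digit_seq m d \<longrightarrow> (\<lambda>N. \<Prod>n\<in>{1..N}. \<bar>p (d n) n\<bar>) \<longlonglongrightarrow> 0)"

definition acc :: "(nat \<Rightarrow> nat \<Rightarrow> real) \<Rightarrow> nat \<Rightarrow> nat \<Rightarrow> real" where
  "acc q i n = (\<Sum>l<i. q l n)"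

definition DeltaQ :: "(nat \<Rightarrow> nat \<Rightarrow> real) \<Rightarrow> (nat \<Rightarrow> nat) \<Rightarrow> real" where
  "DeltaQ q d = acc q (d 1) 1 +
     (\<Sum>k. acc q (d (k+2)) (k+2) * (\<Prod>l\<in>{1..k+1}. q (d l) l))"

text \<open>nega-representation: \<open>\<Delta>^{-Q}_{i_1 i_2 \<dots>} = \<Delta>^Q_{i_1 [m_2-i_2] i_3 \<dots>}\<close>\<close>
definition nega_digits :: "(nat \<Rightarrow> nat) \<Rightarrow> (nat \<Rightarrow> nat) \<Rightarrow> nat \<Rightarrow> nat" where
  "nega_digits m d n = (if even n then m n - d n else d n)"

definition NegaDelta :: "(nat \<Rightarrow> nat) \<Rightarrow> (nat \<Rightarrow> nat \<Rightarrow> real) \<Rightarrow> (nat \<Rightarrow> nat) \<Rightarrow> real" where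
  "NegaDelta m q d = DeltaQ q (nega_digits m d)"

definition p_tilde :: "(nat \<Rightarrow> nat) \<Rightarrow> (nat \<Rightarrow> nat \<Rightarrow> real) \<Rightarrow> nat \<Rightarrow> nat \<Rightarrow> real" where
  "p_tilde m p i n = (if odd n then p i n else p (m n - i) n)"

definition beta_tilde :: "(nat \<Rightarrow> nat) \<Rightarrow> (nat \<Rightarrow> nat \<Rightarrow> real) \<Rightarrow> nat \<Rightarrow> nat \<Rightarrow> real" where
  "beta_tilde m p i n = (if odd n then acc p i n else acc p (m n - i) n)"

definition F_value :: "(nat \<Rightarrow> nat) \<Rightarrow> (nat \<Rightarrow> nat \<Rightarrow> real) \<Rightarrow> (nat \<Rightarrow> nat) \<Rightarrow> real" where
  "F_value m p d = acc p (d 1) 1 +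
     (\<Sum>k. beta_tilde m p (d (k+2)) (k+2) * (\<Prod>j\<in>{1..k+1}. p_tilde m p (d j) j))"

text \<open>\<open>F(x)\<close> computed from a nega-Q representation of x (independent of the choice).\<close>
definition F_fun :: "(nat \<Rightarrow> nat) \<Rightarrow> (nat \<Rightarrow> nat \<Rightarrow> real) \<Rightarrow> (nat \<Rightarrow> nat \<Rightarrow> real) \<Rightarrow> real \<Rightarrow> real" where
  "F_fun m q p x = (SOME y. \<exists>d. digit_seq m d \<and> x = NegaDelta m q d \<and> y = F_value m p d)"

end

theory Submission imports Defs begin

text \<open>The Q-expansion \<open>DeltaQ q\<close> maps digit sequences onto \<open>[0,1]\<close>, lexicographically
  monotonically, and two different sequences have the same image exactly when, at their first
  difference, the larger digit exceeds the smaller one by one, the smaller sequence continues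
  with maximal digits and the larger one with zeros. This condition does not mention \<open>q\<close>, so
  for two matrices \<open>q\<close> and \<open>p\<close> with positive entries the expansions identify the same pairs of
  sequences. Since \<open>F\<close> is \<open>DeltaQ p \<circ> (DeltaQ q)\<inverse>\<close> up to the digit flip at even positions,
  it is well defined, injective and onto.\<close>

definition cyl_len :: "(nat \<Rightarrow> nat \<Rightarrow> real) \<Rightarrow> (nat \<Rightarrow> nat) \<Rightarrow> nat \<Rightarrow> real" where
  "cyl_len q d N = (\<Prod>l\<in>{1..N}. q (d l) l)"

definition DeltaQ_term :: "(nat \<Rightarrow> nat \<Rightarrow> real) \<Rightarrow> (nat \<Rightarrow> nat) \<Rightarrow> nat \<Rightarrow> real" where
  "DeltaQ_term q d n = acc q (d (Suc n)) (Suc n) * cyl_len q d n"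

definition cyl_left :: "(nat \<Rightarrow> nat \<Rightarrow> real) \<Rightarrow> (nat \<Rightarrow> nat) \<Rightarrow> nat \<Rightarrow> real" where
  "cyl_left q d N = (\<Sum>n<N. DeltaQ_term q d n)"

definition cyl_right :: "(nat \<Rightarrow> nat \<Rightarrow> real) \<Rightarrow> (nat \<Rightarrow> nat) \<Rightarrow> nat \<Rightarrow> real" where
  "cyl_right q d N = cyl_left q d N + cyl_len q d N"

lemma acc_0 [simp]: "acc q 0 n = 0"
  by (simp add: acc_def)

lemma acc_Suc: "acc q (Suc i) n = acc q i n + q i n"
  by (simp add: acc_def)

lemma Q_matrix_pos: "Q_matrix m q \<Longrightarrow> n \<ge> 1 \<Longrightarrow> i \<le> m n \<Longrightarrow> q i n > 0"
  by (simp add: Q_matrix_def)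

lemma digit_seq_le: "digit_seq m d \<Longrightarrow> n \<ge> 1 \<Longrightarrow> d n \<le> m n"
  by (simp add: digit_seq_def)

lemma acc_strict_mono:
  assumes "Q_matrix m q" "n \<ge> 1" "i < j" "j \<le> Suc (m n)"
  shows "acc q i n < acc q j n"
  using assms(3,4)
proof (induction j)
  case (Suc j)
  have "q j n > 0" using Q_matrix_pos[OF assms(1,2)] Suc.prems by simp
  then show ?case using Suc by (cases "i = j") (auto simp: acc_Suc)
qed simp

lemma acc_mono:
  assumes "Q_matrix m q" "n \<ge> 1" "i \<le> j" "j \<le> Suc (m n)"
  shows "acc q i n \<le> acc q j n"
  using acc_strict_mono[OF assms(1,2), of i j] assms by (cases "i = j") auto

lemma acc_eq_iff:
  assumes "Q_matrix m q" "n \<ge> 1" "i \<le> Suc (m n)" "j \<le> Suc (m n)"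
  shows "acc q i n = acc q j n \<longleftrightarrow> i = j"
  using acc_strict_mono[OF assms(1,2), of i j] acc_strict_mono[OF assms(1,2), of j i] assms
  by (metis less_irrefl linorder_neqE_nat)

lemma acc_last: "Q_matrix m q \<Longrightarrow> n \<ge> 1 \<Longrightarrow> acc q (Suc (m n)) n = 1"
  by (simp add: acc_def Q_matrix_def lessThan_Suc_atMost)

lemma acc_bounds:
  assumes "Q_matrix m q" "n \<ge> 1" "i \<le> Suc (m n)"
  shows "0 \<le> acc q i n" "acc q i n \<le> 1"
  using acc_mono[OF assms(1,2), of 0 i] acc_mono[OF assms(1,2), of i "Suc (m n)"]
    acc_last[OF assms(1,2)] assms(3) by auto

subsection \<open>Cylinders and the value of an expansion\<close>

lemma cyl_len_0 [simp]: "cyl_len q d 0 = 1"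
  by (simp add: cyl_len_def)

lemma cyl_len_Suc: "cyl_len q d (Suc N) = cyl_len q d N * q (d (Suc N)) (Suc N)"
  by (simp add: cyl_len_def atLeastAtMostSuc_conv mult.commute)

lemma cyl_len_pos: "Q_matrix m q \<Longrightarrow> digit_seq m d \<Longrightarrow> cyl_len q d N > 0"
  unfolding cyl_len_def by (auto intro!: prod_pos simp: Q_matrix_pos digit_seq_le)

lemma cyl_len_tendsto_0: "Q_matrix m q \<Longrightarrow> digit_seq m d \<Longrightarrow> cyl_len q d \<longlonglongrightarrow> 0"
  unfolding Q_matrix_def cyl_len_def by blast

lemma cyl_len_cong:
  "(\<And>l. 1 \<le> l \<Longrightarrow> l \<le> N \<Longrightarrow> e l = e' l) \<Longrightarrow> cyl_len q e N = cyl_len q e' N"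
  unfolding cyl_len_def by (rule prod.cong) auto

lemma cyl_left_cong:
  "(\<And>l. 1 \<le> l \<Longrightarrow> l \<le> N \<Longrightarrow> e l = e' l) \<Longrightarrow> cyl_left q e N = cyl_left q e' N"
  unfolding cyl_left_def DeltaQ_term_def by (rule sum.cong) (auto intro!: cyl_len_cong)

lemma cyl_left_Suc: "cyl_left q d (Suc N) = cyl_left q d N + cyl_len q d N * acc q (d (Suc N)) (Suc N)"
  by (simp add: cyl_left_def DeltaQ_term_def mult.commute)

lemma cyl_right_Suc:
  "cyl_right q d (Suc N) = cyl_left q d N + cyl_len q d N * acc q (Suc (d (Suc N))) (Suc N)"
  by (simp add: cyl_right_def cyl_left_Suc cyl_len_Suc acc_Suc algebra_simps)

lemma cyl_right_Suc_le:
  assumes "Q_matrix m q" "digit_seq m d"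
  shows "cyl_right q d (Suc N) \<le> cyl_right q d N"
proof -
  have "acc q (Suc (d (Suc N))) (Suc N) \<le> 1"
    using acc_bounds(2)[OF assms(1)] digit_seq_le[OF assms(2)] by simp
  then show ?thesis
    using cyl_right_Suc[of q d N] cyl_len_pos[OF assms, of N] by (simp add: cyl_right_def mult_left_le)
qed

lemma DeltaQ_term_nonneg:
  assumes "Q_matrix m q" "digit_seq m d"
  shows "0 \<le> DeltaQ_term q d n"
proof -
  have "d (Suc n) \<le> Suc (m (Suc n))"
    using digit_seq_le[OF assms(2), of "Suc n"] by simp
  then show ?thesis
    unfolding DeltaQ_term_def
    using cyl_len_pos[OF assms, of n] acc_bounds(1)[OF assms(1)] by simp
qed

lemma summable_DeltaQ_term:
  assumes "Q_matrix m q" "digit_seq m d"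
  shows "summable (DeltaQ_term q d)"
proof (rule bounded_imp_summable[where B = 1])
  fix n
  have "decseq (cyl_right q d)"
    by (rule decseq_SucI) (rule cyl_right_Suc_le[OF assms])
  then have "cyl_right q d (Suc n) \<le> cyl_right q d 0"
    by (simp add: decseq_def)
  then have "cyl_right q d (Suc n) \<le> 1"
    by (simp add: cyl_right_def cyl_left_def)
  then show "(\<Sum>k\<le>n. DeltaQ_term q d k) \<le> 1"
    using cyl_len_pos[OF assms, of "Suc n"] by (simp add: cyl_right_def cyl_left_def lessThan_Suc_atMost)
qed (rule DeltaQ_term_nonneg[OF assms])

lemma DeltaQ_eq_suminf:
  assumes "Q_matrix m q" "digit_seq m d"
  shows "DeltaQ q d = (\<Sum>n. DeltaQ_term q d n)"
proof -
  have "(\<Sum>k. DeltaQ_term q d (Suc k)) = (\<Sum>k. DeltaQ_term q d k) - DeltaQ_term q d 0"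
    by (rule suminf_split_head[OF summable_DeltaQ_term[OF assms]])
  moreover have "DeltaQ_term q d 0 = acc q (d 1) 1"
    by (simp add: DeltaQ_term_def)
  moreover have "(\<lambda>k. DeltaQ_term q d (Suc k)) = (\<lambda>k. acc q (d (k+2)) (k+2) * (\<Prod>l\<in>{1..k+1}. q (d l) l))"
    by (simp add: DeltaQ_term_def cyl_len_def)
  ultimately show ?thesis by (simp add: DeltaQ_def)
qed

lemma DeltaQ_cong:
  assumes "\<And>n. n \<ge> 1 \<Longrightarrow> e n = e' n"
  shows "DeltaQ q e = DeltaQ q e'"
proof -
  have "(\<Prod>l\<in>{1..k+1}. q (e l) l) = (\<Prod>l\<in>{1..k+1}. q (e' l) l)" for k
    by (rule prod.cong) (auto simp: assms)
  moreover have "e 1 = e' 1" "\<And>k. e (k+2) = e' (k+2)"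
    using assms by auto
  ultimately show ?thesis unfolding DeltaQ_def by simp
qed

lemma cyl_left_tendsto: "Q_matrix m q \<Longrightarrow> digit_seq m d \<Longrightarrow> cyl_left q d \<longlonglongrightarrow> DeltaQ q d"
  unfolding DeltaQ_eq_suminf cyl_left_def[abs_def] by (rule summable_LIMSEQ[OF summable_DeltaQ_term])

lemma cyl_right_tendsto: "Q_matrix m q \<Longrightarrow> digit_seq m d \<Longrightarrow> cyl_right q d \<longlonglongrightarrow> DeltaQ q d"
  unfolding cyl_right_def[abs_def]
  using tendsto_add[OF cyl_left_tendsto cyl_len_tendsto_0] by simp

lemma cyl_left_le_DeltaQ: "Q_matrix m q \<Longrightarrow> digit_seq m d \<Longrightarrow> cyl_left q d N \<le> DeltaQ q d"
  unfolding DeltaQ_eq_suminf cyl_left_def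
  by (rule sum_le_suminf[OF summable_DeltaQ_term]) (auto intro: DeltaQ_term_nonneg)

lemma DeltaQ_le_cyl_right:
  assumes "Q_matrix m q" "digit_seq m d"
  shows "DeltaQ q d \<le> cyl_right q d N"
proof -
  have "decseq (cyl_right q d)"
    by (rule decseq_SucI) (rule cyl_right_Suc_le[OF assms])
  then show ?thesis using decseq_ge cyl_right_tendsto[OF assms] by blast
qed

lemma DeltaQ_in_unit_interval: "Q_matrix m q \<Longrightarrow> digit_seq m d \<Longrightarrow> DeltaQ q d \<in> {0..1}"
  using cyl_left_le_DeltaQ[of m q d 0] DeltaQ_le_cyl_right[of m q d 0]
  by (simp add: cyl_left_def cyl_right_def)
subsection \<open>Points with two expansions\<close>

lemma all_Suc_add_iff: "(\<forall>j. P (Suc (j + k))) \<longleftrightarrow> (\<forall>n>k. P n)"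
  by (metis add.commute less_iff_Suc_add less_Suc_eq_le le_add2)

lemma DeltaQ_term_eq_0_iff:
  assumes "Q_matrix m q" "digit_seq m d"
  shows "DeltaQ_term q d n = 0 \<longleftrightarrow> d (Suc n) = 0"
proof -
  have "d (Suc n) \<le> Suc (m (Suc n))"
    using digit_seq_le[OF assms(2), of "Suc n"] by simp
  then show ?thesis
    using cyl_len_pos[OF assms, of n] acc_eq_iff[OF assms(1), of "Suc n" "d (Suc n)" 0]
    by (simp add: DeltaQ_term_def)
qed

lemma DeltaQ_eq_cyl_left_iff:
  assumes "Q_matrix m q" "digit_seq m d"
  shows "DeltaQ q d = cyl_left q d k \<longleftrightarrow> (\<forall>n>k. d n = 0)"
proof -
  have sm: "summable (DeltaQ_term q d)"
    by (rule summable_DeltaQ_term[OF assms])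
  have "DeltaQ q d = (\<Sum>j. DeltaQ_term q d (j + k)) + cyl_left q d k"
    unfolding DeltaQ_eq_suminf[OF assms] cyl_left_def using suminf_split_initial_segment[OF sm] by blast
  moreover have "(\<Sum>j. DeltaQ_term q d (j + k)) = 0 \<longleftrightarrow> (\<forall>j. DeltaQ_term q d (j + k) = 0)"
    by (rule suminf_eq_zero_iff) (auto simp: summable_iff_shift sm DeltaQ_term_nonneg[OF assms])
  ultimately show ?thesis
    using DeltaQ_term_eq_0_iff[OF assms] all_Suc_add_iff[of "\<lambda>n. d n = 0" k] by simp
qed

lemma DeltaQ_eq_cyl_right_iff:
  assumes "Q_matrix m q" "digit_seq m d"
  shows "DeltaQ q d = cyl_right q d k \<longleftrightarrow> (\<forall>n>k. d n = m n)"
proof -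
  define g where "g j = cyl_right q d (j + k) - cyl_right q d (Suc (j + k))" for j
  have "(\<lambda>j. cyl_right q d (j + k)) \<longlonglongrightarrow> DeltaQ q d"
    by (rule LIMSEQ_ignore_initial_segment[OF cyl_right_tendsto[OF assms]])
  then have sums: "g sums (cyl_right q d k - DeltaQ q d)"
    using telescope_sums' unfolding g_def[abs_def] by fastforce
  have g_eq: "g j = cyl_len q d (j + k) * (1 - acc q (Suc (d (Suc (j + k)))) (Suc (j + k)))" for j
    unfolding g_def cyl_right_Suc by (simp add: cyl_right_def algebra_simps)
  have g_nonneg: "0 \<le> g j" for j
  proof -
    let ?n = "Suc (j + k)"
    have "acc q (Suc (d ?n)) ?n \<le> 1"
      using acc_bounds(2)[OF assms(1), of ?n] digit_seq_le[OF assms(2), of ?n] by simp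
    then show ?thesis using g_eq[of j] cyl_len_pos[OF assms, of "j + k"] by simp
  qed
  have g_eq_0_iff: "g j = 0 \<longleftrightarrow> d (Suc (j + k)) = m (Suc (j + k))" for j
  proof -
    let ?n = "Suc (j + k)"
    have "g j = 0 \<longleftrightarrow> acc q (Suc (d ?n)) ?n = acc q (Suc (m ?n)) ?n"
      using cyl_len_pos[OF assms, of "j + k"] acc_last[OF assms(1), of ?n] g_eq[of j] by auto
    also have "\<dots> \<longleftrightarrow> d ?n = m ?n"
      using acc_eq_iff[OF assms(1), of ?n "Suc (d ?n)" "Suc (m ?n)"] digit_seq_le[OF assms(2), of ?n]
      by simp
    finally show ?thesis .
  qed
  have "DeltaQ q d = cyl_right q d k \<longleftrightarrow> (\<forall>j. g j = 0)"
    using suminf_eq_zero_iff[OF sums_summable[OF sums] g_nonneg] sums_unique[OF sums] by auto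
  then show ?thesis
    using g_eq_0_iff all_Suc_add_iff[of "\<lambda>n. d n = m n" k] by simp
qed

lemma DeltaQ_eq_iff_at_first_difference:
  assumes q: "Q_matrix m q" and e: "digit_seq m e" and e': "digit_seq m e'"
    and agree: "\<And>n. 1 \<le> n \<Longrightarrow> n \<le> j \<Longrightarrow> e n = e' n"
    and less: "e (Suc j) < e' (Suc j)"
  shows "DeltaQ q e = DeltaQ q e' \<longleftrightarrow>
    e' (Suc j) = Suc (e (Suc j)) \<and> (\<forall>n>Suc j. e n = m n) \<and> (\<forall>n>Suc j. e' n = 0)"
proof -
  let ?k = "Suc j"
  have len: "cyl_len q e j = cyl_len q e' j" and left: "cyl_left q e j = cyl_left q e' j"
    using agree by (auto intro: cyl_len_cong cyl_left_cong)
  have "e' ?k \<le> m ?k"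
    using digit_seq_le[OF e'] by simp
  then have "acc q (Suc (e ?k)) ?k \<le> acc q (e' ?k) ?k"
    and acc_eq: "acc q (Suc (e ?k)) ?k = acc q (e' ?k) ?k \<longleftrightarrow> e' ?k = Suc (e ?k)"
    using acc_mono[OF q, of ?k "Suc (e ?k)" "e' ?k"] acc_eq_iff[OF q, of ?k "Suc (e ?k)" "e' ?k"] less
    by auto
  moreover have "cyl_len q e j > 0"
    by (rule cyl_len_pos[OF q e])
  ultimately have gap: "cyl_right q e ?k \<le> cyl_left q e' ?k"
    and gap_eq: "cyl_right q e ?k = cyl_left q e' ?k \<longleftrightarrow> e' ?k = Suc (e ?k)"
    using len left by (auto simp: cyl_right_Suc cyl_left_Suc)
  have "DeltaQ q e \<le> cyl_right q e ?k" "cyl_left q e' ?k \<le> DeltaQ q e'"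
    using DeltaQ_le_cyl_right[OF q e] cyl_left_le_DeltaQ[OF q e'] by auto
  with gap have "DeltaQ q e = DeltaQ q e' \<longleftrightarrow>
      DeltaQ q e = cyl_right q e ?k \<and> cyl_right q e ?k = cyl_left q e' ?k \<and> cyl_left q e' ?k = DeltaQ q e'"
    by linarith
  then show ?thesis
    using DeltaQ_eq_cyl_right_iff[OF q e, of ?k] DeltaQ_eq_cyl_left_iff[OF q e', of ?k] gap_eq by metis
qed

lemma DeltaQ_eq_iff_DeltaQ_eq:
  assumes q: "Q_matrix m q" and p: "Q_matrix m p" and e: "digit_seq m e" and e': "digit_seq m e'"
  shows "DeltaQ q e = DeltaQ q e' \<longleftrightarrow> DeltaQ p e = DeltaQ p e'"
proof (cases "\<forall>n\<ge>1. e n = e' n")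
  case True
  then show ?thesis using DeltaQ_cong[of e e'] by auto
next
  case False
  define k where "k = (LEAST n. n \<ge> 1 \<and> e n \<noteq> e' n)"
  have k: "k \<ge> 1" "e k \<noteq> e' k"
    unfolding k_def using False LeastI[of "\<lambda>n. n \<ge> 1 \<and> e n \<noteq> e' n"] by auto
  then obtain j where j: "k = Suc j" by (cases k) auto
  have agree: "e n = e' n" if "1 \<le> n" "n \<le> j" for n
    using not_less_Least[of n "\<lambda>n. n \<ge> 1 \<and> e n \<noteq> e' n"] that j unfolding k_def by auto
  show ?thesis
  proof (cases "e k < e' k")
    case True
    then show ?thesis
      using DeltaQ_eq_iff_at_first_difference[OF q e e' agree, of j]
        DeltaQ_eq_iff_at_first_difference[OF p e e' agree, of j] j by simp
  next
    case False
    with k have "e' (Suc j) < e (Suc j)" using j by auto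
    then show ?thesis
      using DeltaQ_eq_iff_at_first_difference[OF q e' e, of j]
        DeltaQ_eq_iff_at_first_difference[OF p e' e, of j] agree by (metis (no_types, lifting))
  qed
qed

subsection \<open>Existence of an expansion\<close>

definition greedy_digit :: "(nat \<Rightarrow> nat \<Rightarrow> real) \<Rightarrow> (nat \<Rightarrow> nat) \<Rightarrow> nat \<Rightarrow> real \<Rightarrow> nat" where
  "greedy_digit q m n y = Max {i. i \<le> m n \<and> acc q i n \<le> y}"

text \<open>\<open>greedy_rest q m x N\<close> is the position of \<open>x\<close> inside its cylinder of rank \<open>N\<close>,
  rescaled to \<open>[0,1]\<close>.\<close>

primrec greedy_rest :: "(nat \<Rightarrow> nat \<Rightarrow> real) \<Rightarrow> (nat \<Rightarrow> nat) \<Rightarrow> real \<Rightarrow> nat \<Rightarrow> real" where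
  "greedy_rest q m x 0 = x"
| "greedy_rest q m x (Suc n) =
    (let y = greedy_rest q m x n; i = greedy_digit q m (Suc n) y
     in (y - acc q i (Suc n)) / q i (Suc n))"

definition greedy_digits :: "(nat \<Rightarrow> nat \<Rightarrow> real) \<Rightarrow> (nat \<Rightarrow> nat) \<Rightarrow> real \<Rightarrow> nat \<Rightarrow> nat" where
  "greedy_digits q m x n = (case n of 0 \<Rightarrow> 0 | Suc k \<Rightarrow> greedy_digit q m n (greedy_rest q m x k))"

lemma greedy_digit_bounds:
  assumes q: "Q_matrix m q" and n: "n \<ge> 1" and y: "0 \<le> y" "y \<le> 1"
  shows "greedy_digit q m n y \<le> m n" "acc q (greedy_digit q m n y) n \<le> y"
    "y \<le> acc q (Suc (greedy_digit q m n y)) n"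
proof -
  let ?S = "{i. i \<le> m n \<and> acc q i n \<le> y}"
  let ?i = "greedy_digit q m n y"
  have fin: "finite ?S"
    by (rule finite_subset[of _ "{..m n}"]) auto
  have "0 \<in> ?S"
    using y by simp
  then have mem: "?i \<in> ?S"
    unfolding greedy_digit_def using Max_in[OF fin] by blast
  then show "?i \<le> m n" "acc q ?i n \<le> y" by auto
  show "y \<le> acc q (Suc ?i) n"
  proof (cases "?i < m n")
    case True
    have "Suc ?i \<notin> ?S"
    proof
      assume "Suc ?i \<in> ?S"
      then have "Suc ?i \<le> ?i"
        unfolding greedy_digit_def using Max_ge[OF fin] by blast
      then show False by simp
    qed
    then show ?thesis using True by auto
  next
    case False
    then show ?thesis using mem acc_last[OF q n] y by auto
  qed
qed

lemma greedy_rest_bounds: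
  assumes q: "Q_matrix m q" and x: "0 \<le> x" "x \<le> 1"
  shows "greedy_rest q m x n \<in> {0..1}"
proof (induction n)
  case (Suc n)
  let ?y = "greedy_rest q m x n" let ?i = "greedy_digit q m (Suc n) ?y"
  have i: "?i \<le> m (Suc n)" "acc q ?i (Suc n) \<le> ?y" "?y \<le> acc q ?i (Suc n) + q ?i (Suc n)"
    using greedy_digit_bounds[OF q, of "Suc n" ?y] Suc by (auto simp: acc_Suc)
  then have "q ?i (Suc n) > 0"
    using Q_matrix_pos[OF q] by simp
  then show ?case
    using i by (simp add: Let_def divide_le_eq_1)
qed (use x in simp)

lemma greedy_digits_digit_seq:
  assumes q: "Q_matrix m q" and x: "0 \<le> x" "x \<le> 1"
  shows "digit_seq m (greedy_digits q m x)"
  unfolding digit_seq_def greedy_digits_def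
  using greedy_digit_bounds(1)[OF q] greedy_rest_bounds[OF q x] by (auto split: nat.split)

lemma greedy_rest_eq:
  assumes q: "Q_matrix m q" and x: "0 \<le> x" "x \<le> 1"
  shows "x = cyl_left q (greedy_digits q m x) N + cyl_len q (greedy_digits q m x) N * greedy_rest q m x N"
proof (induction N)
  case (Suc N)
  let ?e = "greedy_digits q m x"
  let ?y = "greedy_rest q m x N" let ?i = "greedy_digit q m (Suc N) ?y"
  have e: "?e (Suc N) = ?i"
    by (simp add: greedy_digits_def)
  have "q ?i (Suc N) > 0"
    using greedy_digit_bounds(1)[OF q] greedy_rest_bounds[OF q x] Q_matrix_pos[OF q] by simp
  then have "cyl_left q ?e (Suc N) + cyl_len q ?e (Suc N) * greedy_rest q m x (Suc N)
      = cyl_left q ?e N + cyl_len q ?e N * ?y"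
    by (simp add: cyl_left_Suc cyl_len_Suc e Let_def field_simps)
  then show ?case using Suc by simp
qed (simp add: cyl_left_def)

lemma DeltaQ_greedy_digits:
  assumes q: "Q_matrix m q" and x: "0 \<le> x" "x \<le> 1"
  shows "DeltaQ q (greedy_digits q m x) = x"
proof -
  let ?e = "greedy_digits q m x"
  have e: "digit_seq m ?e"
    by (rule greedy_digits_digit_seq[OF q x])
  have "(\<lambda>N. cyl_len q ?e N * greedy_rest q m x N) \<longlonglongrightarrow> 0"
  proof (rule tendsto_sandwich[of "\<lambda>_. 0" _ sequentially "cyl_len q ?e"])
    show "\<forall>\<^sub>F N in sequentially. 0 \<le> cyl_len q ?e N * greedy_rest q m x N"
      "\<forall>\<^sub>F N in sequentially. cyl_len q ?e N * greedy_rest q m x N \<le> cyl_len q ?e N"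
      using cyl_len_pos[OF q e] greedy_rest_bounds[OF q x]
      by (auto intro!: always_eventually mult_left_le simp: less_imp_le)
  qed (auto intro: cyl_len_tendsto_0[OF q e])
  then have "(\<lambda>N. x - cyl_len q ?e N * greedy_rest q m x N) \<longlonglongrightarrow> x"
    by (auto intro: tendsto_eq_intros)
  moreover have "(\<lambda>N. x - cyl_len q ?e N * greedy_rest q m x N) = cyl_left q ?e"
    using greedy_rest_eq[OF q x] by (auto simp: algebra_simps)
  ultimately show ?thesis
    using cyl_left_tendsto[OF q e] LIMSEQ_unique by auto
qed

lemma DeltaQ_image:
  assumes q: "Q_matrix m q"
  shows "DeltaQ q ` {e. digit_seq m e} = {0..1}"
proof
  show "DeltaQ q ` {e. digit_seq m e} \<subseteq> {0..1}"
    using DeltaQ_in_unit_interval[OF q] by blast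
  show "{0..1} \<subseteq> DeltaQ q ` {e. digit_seq m e}"
  proof
    fix x :: real assume "x \<in> {0..1}"
    then show "x \<in> DeltaQ q ` {e. digit_seq m e}"
      using DeltaQ_greedy_digits[OF q] greedy_digits_digit_seq[OF q] by (metis atLeastAtMost_iff image_eqI mem_Collect_eq)
  qed
qed

lemma Q_matrix_if_P_matrix_pos:
  assumes P: "P_matrix m p" and pos: "\<forall>n\<ge>1. \<forall>i\<le>m n. p i n > 0"
  shows "Q_matrix m p"
proof -
  have "(\<Prod>n\<in>{1..N}. \<bar>p (d n) n\<bar>) = (\<Prod>n\<in>{1..N}. p (d n) n)" if "digit_seq m d" for d N
    using pos that by (intro prod.cong) (auto simp: digit_seq_def less_imp_le)
  then show ?thesis
    using P pos unfolding P_matrix_def Q_matrix_def by simp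
qed

lemma nega_digits_digit_seq: "digit_seq m d \<Longrightarrow> digit_seq m (nega_digits m d)"
  by (auto simp: digit_seq_def nega_digits_def)

lemma nega_digits_nega_digits:
  "digit_seq m d \<Longrightarrow> n \<ge> 1 \<Longrightarrow> nega_digits m (nega_digits m d) n = d n"
  by (auto simp: digit_seq_def nega_digits_def)

lemma F_value_eq_DeltaQ: "F_value m p d = DeltaQ p (nega_digits m d)"
proof -
  have "beta_tilde m p (d k) k = acc p (nega_digits m d k) k"
    and "p_tilde m p (d k) k = p (nega_digits m d k) k"
    and "nega_digits m d 1 = d 1" for k
    by (simp_all add: beta_tilde_def p_tilde_def nega_digits_def)
  then show ?thesis
    unfolding F_value_def DeltaQ_def by simp
qed

lemma F_fun_DeltaQ:
  assumes q: "Q_matrix m q" and p: "Q_matrix m p" and e: "digit_seq m e"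
  shows "F_fun m q p (DeltaQ q e) = DeltaQ p e"
proof -
  let ?P = "\<lambda>y. \<exists>d. digit_seq m d \<and> DeltaQ q e = NegaDelta m q d \<and> y = F_value m p d"
  have flip_flip: "DeltaQ r (nega_digits m (nega_digits m e)) = DeltaQ r e" for r
    by (rule DeltaQ_cong) (simp add: nega_digits_nega_digits[OF e])
  have "?P (DeltaQ p e)"
    using nega_digits_digit_seq[OF e] flip_flip
    unfolding NegaDelta_def F_value_eq_DeltaQ by metis
  then have "?P (F_fun m q p (DeltaQ q e))"
    unfolding F_fun_def by (rule someI)
  then obtain d where d: "digit_seq m d" "DeltaQ q e = DeltaQ q (nega_digits m d)"
    "F_fun m q p (DeltaQ q e) = DeltaQ p (nega_digits m d)"
    unfolding NegaDelta_def F_value_eq_DeltaQ by blast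
  then show ?thesis
    using DeltaQ_eq_iff_DeltaQ_eq[OF q p e nega_digits_digit_seq[OF d(1)]] by simp
qed

lemma bij_betw_by_parametrization:
  assumes "g ` E = A" "h ` E = B" "\<And>e. e \<in> E \<Longrightarrow> f (g e) = h e"
    "\<And>e e'. e \<in> E \<Longrightarrow> e' \<in> E \<Longrightarrow> g e = g e' \<longleftrightarrow> h e = h e'"
  shows "bij_betw f A B"
proof (rule bij_betw_imageI)
  show "inj_on f A"
    using assms(1,3,4) by (auto intro!: inj_onI)
  have "f ` g ` E = h ` E"
    using assms(3) by (auto simp: image_image intro!: image_cong)
  then show "f ` A = B"
    using assms(1,2) by simp
qed

theorem mainTheorem6:
  fixes m :: "nat \<Rightarrow> nat" and q p :: "nat \<Rightarrow> nat \<Rightarrow> real"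
  assumes "Q_matrix m q"
    and "P_matrix m p"
    and "\<forall>n\<ge>1. \<forall>i\<le>m n. p i n > 0"
  shows "bij_betw (F_fun m q p) {0..1} {0..1}"
proof (rule bij_betw_by_parametrization)
  have p: "Q_matrix m p"
    using Q_matrix_if_P_matrix_pos[OF assms(2,3)] .
  show "DeltaQ q ` {e. digit_seq m e} = {0..1}" "DeltaQ p ` {e. digit_seq m e} = {0..1}"
    using DeltaQ_image[OF assms(1)] DeltaQ_image[OF p] .
  show "F_fun m q p (DeltaQ q e) = DeltaQ p e" if "e \<in> {e. digit_seq m e}" for e
    using F_fun_DeltaQ[OF assms(1) p] that by simp
  show "DeltaQ q e = DeltaQ q e' \<longleftrightarrow> DeltaQ p e = DeltaQ p e'"
    if "e \<in> {e. digit_seq m e}" "e' \<in> {e. digit_seq m e}" for e e'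
    using DeltaQ_eq_iff_DeltaQ_eq[OF assms(1) p] that by simp
qed

end
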